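(* Let $n\ge 1$. If $E\subseteq\mathbb{N}\times\mathbb{N}$ is a $\Sigma^0_{n+1}$ index equivalence relation, then $E$ is $\Pi^0_n$-graphable with diameter $2$.
   Context: $\varphi_e$ denotes the $e$-th partial computable function in a standard acceptable numbering. An equivalence relation $E$ on $\mathbb{N}$ is an index equivalence relation if whenever $\varphi_a=\varphi_{a'}$ and $\varphi_b=\varphi_{b'}$, we have $aEb\iff a'Eb'$. An equivalence relation $E$ on $X$ is $\Gamma$-graphable (for a pointclass $\Gamma$) if there is a simple undirected graph $G\subseteq X\times X$ in $\Gamma$ whose connectedness relation equals $E$; it is $\Gamma$-graphable with diameter $k$ if such a $G$ exists in which $k$ is the least integer such that any two $G$-connected points are joined by a path of length at most $k$. *)

theory Defs
  imports Main "HOL-Library.Nat_Bijection"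
begin

datatype recf = Zero | Succ | Proj nat | Comp recf "recf list" | Prim recf recf | Mini recf

inductive eval :: "recf \<Rightarrow> nat list \<Rightarrow> nat \<Rightarrow> bool" where
  eval_zero: "eval Zero xs 0"
| eval_succ: "eval Succ (x # xs) (Suc x)"
| eval_proj: "i < length xs \<Longrightarrow> eval (Proj i) xs (xs ! i)"
| eval_comp: "length ys = length gs \<Longrightarrow> (\<forall>i < length gs. eval (gs ! i) xs (ys ! i))
              \<Longrightarrow> eval f ys v \<Longrightarrow> eval (Comp f gs) xs v"
| eval_prim0: "eval f xs v \<Longrightarrow> eval (Prim f g) (0 # xs) v"
| eval_primS: "eval (Prim f g) (m # xs) u \<Longrightarrow> eval g (m # u # xs) v
              \<Longrightarrow> eval (Prim f g) (Suc m # xs) v"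
| eval_mini: "eval f (y # xs) 0 \<Longrightarrow> (\<forall>z < y. \<exists>v. eval f (z # xs) (Suc v))
              \<Longrightarrow> eval (Mini f) xs y"

definition partial_computable :: "(nat \<Rightarrow> nat option) \<Rightarrow> bool" where
  "partial_computable f \<longleftrightarrow> (\<exists>r. \<forall>x v. eval r [x] v \<longleftrightarrow> f x = Some v)"

definition partial_computable2 :: "(nat \<Rightarrow> nat \<Rightarrow> nat option) \<Rightarrow> bool" where
  "partial_computable2 g \<longleftrightarrow> partial_computable (\<lambda>z. case prod_decode z of (x, y) \<Rightarrow> g x y)"

definition total_computable :: "(nat \<Rightarrow> nat) \<Rightarrow> bool" where
  "total_computable s \<longleftrightarrow> partial_computable (\<lambda>x. Some (s x))"

text \<open>Acceptable (Goedel) numbering of the partial computable functions (Rogers):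
  the universal function is partial computable and the s-m-n property holds.\<close>
definition acceptable_numbering :: "(nat \<Rightarrow> nat \<Rightarrow> nat option) \<Rightarrow> bool" where
  "acceptable_numbering \<phi> \<longleftrightarrow>
     partial_computable2 \<phi> \<and>
     (\<forall>g. partial_computable2 g \<longrightarrow> (\<exists>s. total_computable s \<and> (\<forall>x y. \<phi> (s x) y = g x y)))"

definition decidable_set :: "nat set \<Rightarrow> bool" where
  "decidable_set A \<longleftrightarrow> total_computable (\<lambda>x. if x \<in> A then 1 else 0)"

fun arith_sigma :: "nat \<Rightarrow> nat set \<Rightarrow> bool" where
  "arith_sigma 0 A = decidable_set A"
| "arith_sigma (Suc n) A =
     (\<exists>B. arith_sigma n (- B) \<and> A = {x. \<exists>y. prod_encode (x, y) \<in> B})"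

definition arith_pi :: "nat \<Rightarrow> nat set \<Rightarrow> bool" where
  "arith_pi n A \<longleftrightarrow> arith_sigma n (- A)"

definition rel_code :: "(nat \<times> nat) set \<Rightarrow> nat set" where
  "rel_code R = prod_encode ` R"

definition index_equivalence :: "(nat \<Rightarrow> nat \<Rightarrow> nat option) \<Rightarrow> (nat \<times> nat) set \<Rightarrow> bool" where
  "index_equivalence \<phi> E \<longleftrightarrow> equiv UNIV E \<and>
     (\<forall>a a' b b'. \<phi> a = \<phi> a' \<longrightarrow> \<phi> b = \<phi> b' \<longrightarrow> ((a, b) \<in> E \<longleftrightarrow> (a', b') \<in> E))"

definition simple_graph :: "('a \<times> 'a) set \<Rightarrow> bool" where
  "simple_graph G \<longleftrightarrow> sym G \<and> irrefl G"

definition has_diameter :: "('a \<times> 'a) set \<Rightarrow> nat \<Rightarrow> bool" where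
  "has_diameter G k \<longleftrightarrow>
     (\<forall>x y. (x, y) \<in> G\<^sup>* \<longrightarrow> (\<exists>j\<le>k. (x, y) \<in> G ^^ j)) \<and>
     (\<forall>k' < k. \<not> (\<forall>x y. (x, y) \<in> G\<^sup>* \<longrightarrow> (\<exists>j\<le>k'. (x, y) \<in> G ^^ j)))"

definition graphable_with_diameter ::
    "(nat set \<Rightarrow> bool) \<Rightarrow> (nat \<times> nat) set \<Rightarrow> nat \<Rightarrow> bool" where
  "graphable_with_diameter \<Gamma> E k \<longleftrightarrow>
     (\<exists>G. \<Gamma> (rel_code G) \<and> simple_graph G \<and> G\<^sup>* = E \<and> has_diameter G k)"

end

theory Submission
  imports Defs
begin

(*
  In an acceptable numbering the recursion theorem yields a padding function: a computable,
  strictly increasing p with \<phi> (p w) = \<phi> (fst w), w read as a pair. Write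
  (a, b) \<in> E as \<exists>y. \<langle>\<langle>a, b\<rangle>, y\<rangle> \<in> B with B in \<Pi>\<^sub>n. Each witness y yields infinitely many fresh
  indices p \<langle>a, \<langle>b, \<langle>y, i\<rangle>\<rangle>\<rangle>, all E-equivalent to a; join each of them to a and to b.
  Because p is strictly increasing, its range and inverse are computable, so the edge relation is
  \<Pi>\<^sub>n. Equivalent points are joined through such a vertex, while two padded copies of 0 are
  equivalent but not adjacent, so the diameter is exactly 2.
*)

abbreviation pair :: "nat \<Rightarrow> nat \<Rightarrow> nat" where "pair a b \<equiv> prod_encode (a, b)"
abbreviation pfst :: "nat \<Rightarrow> nat" where "pfst z \<equiv> fst (prod_decode z)"
abbreviation psnd :: "nat \<Rightarrow> nat" where "psnd z \<equiv> snd (prod_decode z)"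

section \<open>Partial recursive functions of several arguments\<close>

definition computes :: "recf \<Rightarrow> nat \<Rightarrow> (nat list \<Rightarrow> nat option) \<Rightarrow> bool" where
  "computes r k F \<longleftrightarrow> (\<forall>xs v. length xs = k \<longrightarrow> (eval r xs v \<longleftrightarrow> F xs = Some v))"

definition partial_rec :: "nat \<Rightarrow> (nat list \<Rightarrow> nat option) \<Rightarrow> bool" where
  "partial_rec k F \<longleftrightarrow> (\<exists>r. computes r k F)"

definition total_rec :: "nat \<Rightarrow> (nat list \<Rightarrow> nat) \<Rightarrow> bool" where
  "total_rec k f \<longleftrightarrow> partial_rec k (\<lambda>xs. Some (f xs))"

definition rec_pred :: "nat \<Rightarrow> (nat list \<Rightarrow> bool) \<Rightarrow> bool" where
  "rec_pred k P \<longleftrightarrow> total_rec k (\<lambda>xs. if P xs then 1 else 0)"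

lemma partial_rec_cong:
  assumes "partial_rec k F" "\<And>xs. length xs = k \<Longrightarrow> F xs = G xs"
  shows "partial_rec k G"
  using assms unfolding partial_rec_def computes_def by metis

lemma total_rec_cong:
  assumes "total_rec k f" "\<And>xs. length xs = k \<Longrightarrow> f xs = g xs"
  shows "total_rec k g"
  using assms unfolding total_rec_def by (metis partial_rec_cong)

lemma rec_pred_cong:
  assumes "rec_pred k P" "\<And>xs. length xs = k \<Longrightarrow> P xs = Q xs"
  shows "rec_pred k Q"
  using total_rec_cong[OF assms(1)[unfolded rec_pred_def]] assms(2) unfolding rec_pred_def by auto

lemma total_rec_zero: "total_rec k (\<lambda>_. 0)"
  unfolding total_rec_def partial_rec_def computes_def
  by (rule exI[of _ Zero]) (auto elim: eval.cases intro: eval.intros)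

lemma total_rec_proj: "i < k \<Longrightarrow> total_rec k (\<lambda>xs. xs ! i)"
  unfolding total_rec_def partial_rec_def computes_def
  by (rule exI[of _ "Proj i"]) (auto elim: eval.cases intro: eval.intros)

lemma total_rec_succ: "total_rec 1 (\<lambda>xs. Suc (xs ! 0))"
  unfolding total_rec_def partial_rec_def computes_def
proof (intro exI[of _ Succ] allI impI)
  fix xs :: "nat list" and v
  assume "length xs = 1"
  then obtain x where "xs = [x]" by (cases xs) auto
  then show "eval Succ xs v \<longleftrightarrow> Some (Suc (xs ! 0)) = Some v"
    by (auto elim: eval.cases intro: eval.intros)
qed

lemma eval_Comp_iff:
  "eval (Comp f gs) xs v \<longleftrightarrow>
     (\<exists>ys. length ys = length gs \<and> (\<forall>i < length gs. eval (gs ! i) xs (ys ! i)) \<and> eval f ys v)"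
  by (auto elim: eval.cases intro: eval.intros)

lemma computes_Comp:
  assumes len: "length gs = length Fs"
    and gs: "\<And>i. i < length Fs \<Longrightarrow> computes (gs ! i) k (Fs ! i)"
    and f: "computes f (length Fs) H"
  shows "computes (Comp f gs) k
     (\<lambda>xs. if \<forall>F\<in>set Fs. F xs \<noteq> None then H (map (\<lambda>F. the (F xs)) Fs) else None)"
  unfolding computes_def
proof (intro allI impI)
  fix xs :: "nat list" and v
  assume lx: "length xs = k"
  have gs_iff: "eval (gs ! i) xs u \<longleftrightarrow> (Fs ! i) xs = Some u" if "i < length Fs" for i u
    using gs[OF that] lx unfolding computes_def by blast
  show "eval (Comp f gs) xs v \<longleftrightarrow>
     (if \<forall>F\<in>set Fs. F xs \<noteq> None then H (map (\<lambda>F. the (F xs)) Fs) else None) = Some v"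
  proof
    assume "eval (Comp f gs) xs v"
    then obtain ys where ys: "length ys = length gs" "\<forall>i < length gs. eval (gs ! i) xs (ys ! i)"
        "eval f ys v"
      unfolding eval_Comp_iff by blast
    have Fs_ys: "(Fs ! i) xs = Some (ys ! i)" if "i < length Fs" for i
      using gs_iff that ys(2) len by auto
    then have defined: "\<forall>F\<in>set Fs. F xs \<noteq> None"
      by (metis in_set_conv_nth option.distinct(1))
    have "ys = map (\<lambda>F. the (F xs)) Fs"
      by (rule nth_equalityI) (use ys(1) len Fs_ys in auto)
    then show "(if \<forall>F\<in>set Fs. F xs \<noteq> None then H (map (\<lambda>F. the (F xs)) Fs) else None) = Some v"
      using defined ys f len unfolding computes_def by auto
  next
    assume h: "(if \<forall>F\<in>set Fs. F xs \<noteq> None then H (map (\<lambda>F. the (F xs)) Fs) else None) = Some v"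
    then have defined: "\<forall>F\<in>set Fs. F xs \<noteq> None" by (auto split: if_splits)
    define ys where "ys = map (\<lambda>F. the (F xs)) Fs"
    have "eval f ys v" using h defined f unfolding ys_def computes_def by auto
    moreover have "\<forall>i < length gs. eval (gs ! i) xs (ys ! i)"
      using defined len gs_iff by (auto simp: ys_def)
    moreover have "length ys = length gs" using len unfolding ys_def by simp
    ultimately show "eval (Comp f gs) xs v" unfolding eval_Comp_iff by blast
  qed
qed

lemma partial_rec_comp:
  assumes "partial_rec (length Fs) H" "\<And>F. F \<in> set Fs \<Longrightarrow> partial_rec k F"
  shows "partial_rec k
     (\<lambda>xs. if \<forall>F\<in>set Fs. F xs \<noteq> None then H (map (\<lambda>F. the (F xs)) Fs) else None)"
proof -
  obtain f where f: "computes f (length Fs) H" using assms(1) unfolding partial_rec_def by blast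
  have "\<forall>i < length Fs. \<exists>r. computes r k (Fs ! i)" using assms(2) unfolding partial_rec_def by auto
  then obtain R where R: "\<forall>i < length Fs. computes (R i) k (Fs ! i)" by metis
  show ?thesis unfolding partial_rec_def
    by (rule exI, rule computes_Comp[OF _ _ f, of "map R [0..<length Fs]"]) (auto simp: R)
qed

lemma total_rec_comp:
  assumes "total_rec (length fs) h" "\<And>f. f \<in> set fs \<Longrightarrow> total_rec k f"
  shows "total_rec k (\<lambda>xs. h (map (\<lambda>f. f xs) fs))"
proof -
  have "partial_rec k (\<lambda>xs. if \<forall>F\<in>set (map (\<lambda>f xs. Some (f xs)) fs). F xs \<noteq> None
       then Some (h (map (\<lambda>F. the (F xs)) (map (\<lambda>f xs. Some (f xs)) fs))) else None)"
    by (rule partial_rec_comp) (use assms in \<open>auto simp: total_rec_def\<close>)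
  then show ?thesis unfolding total_rec_def by (rule partial_rec_cong) (simp add: comp_def)
qed

lemma total_rec_comp1:
  "total_rec 1 h \<Longrightarrow> total_rec k f \<Longrightarrow> total_rec k (\<lambda>xs. h [f xs])"
  using total_rec_comp[of "[f]" h k] by auto

lemma total_rec_comp2:
  "total_rec 2 h \<Longrightarrow> total_rec k f \<Longrightarrow> total_rec k g \<Longrightarrow> total_rec k (\<lambda>xs. h [f xs, g xs])"
  using total_rec_comp[of "[f, g]" h k] by (auto simp: numeral_2_eq_2)

lemma total_rec_comp3:
  "total_rec 3 h \<Longrightarrow> total_rec k f \<Longrightarrow> total_rec k g \<Longrightarrow> total_rec k e \<Longrightarrow>
     total_rec k (\<lambda>xs. h [f xs, g xs, e xs])"
  using total_rec_comp[of "[f, g, e]" h k] by (auto simp: numeral_3_eq_3)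

lemma total_rec_binary:
  assumes "total_rec 2 (\<lambda>xs. h (xs ! 0) (xs ! 1))" "total_rec k f" "total_rec k g"
  shows "total_rec k (\<lambda>xs. h (f xs) (g xs))"
  by (rule total_rec_cong[OF total_rec_comp2[OF assms]]) simp

fun prec :: "(nat list \<Rightarrow> nat) \<Rightarrow> (nat list \<Rightarrow> nat) \<Rightarrow> nat \<Rightarrow> nat list \<Rightarrow> nat" where
  "prec f g 0 ys = f ys"
| "prec f g (Suc m) ys = g (m # prec f g m ys # ys)"

lemma eval_Prim_0_iff: "eval (Prim f g) (0 # xs) v \<longleftrightarrow> eval f xs v"
  by (auto elim: eval.cases intro: eval.intros)

lemma eval_Prim_Suc_iff:
  "eval (Prim f g) (Suc m # xs) v \<longleftrightarrow> (\<exists>u. eval (Prim f g) (m # xs) u \<and> eval g (m # u # xs) v)"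
  by (auto elim: eval.cases intro: eval.intros)

lemma total_rec_prim_rec:
  assumes "total_rec k f" "total_rec (Suc (Suc k)) g"
    and h: "\<And>m ys. length ys = k \<Longrightarrow> h (m # ys) = prec f g m ys"
  shows "total_rec (Suc k) h"
proof -
  obtain rf where rf: "computes rf k (\<lambda>xs. Some (f xs))"
    using assms(1) unfolding total_rec_def partial_rec_def by blast
  obtain rg where rg: "computes rg (Suc (Suc k)) (\<lambda>xs. Some (g xs))"
    using assms(2) unfolding total_rec_def partial_rec_def by blast
  have Prim: "eval (Prim rf rg) (m # ys) v \<longleftrightarrow> v = prec f g m ys" if "length ys = k" for m ys v
    using that
  proof (induction m arbitrary: v)
    case 0
    then show ?case using rf unfolding computes_def by (auto simp: eval_Prim_0_iff)
  next
    case (Suc m)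
    then show ?case using rg unfolding computes_def by (auto simp: eval_Prim_Suc_iff)
  qed
  show ?thesis unfolding total_rec_def partial_rec_def computes_def
  proof (intro exI[of _ "Prim rf rg"] allI impI)
    fix xs :: "nat list" and v
    assume "length xs = Suc k"
    then obtain m ys where "xs = m # ys" "length ys = k" by (cases xs) auto
    then show "eval (Prim rf rg) xs v \<longleftrightarrow> Some (h xs) = Some v" using Prim h by auto
  qed
qed

lemma eval_Mini_iff:
  "eval (Mini f) xs y \<longleftrightarrow> eval f (y # xs) 0 \<and> (\<forall>z < y. \<exists>v. eval f (z # xs) (Suc v))"
  by (auto elim: eval.cases intro: eval.intros)

lemma total_rec_minimize:
  assumes "total_rec (Suc k) f" "\<And>xs. length xs = k \<Longrightarrow> \<exists>y. f (y # xs) = 0"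
  shows "total_rec k (\<lambda>xs. LEAST y. f (y # xs) = 0)"
proof -
  obtain rf where rf: "computes rf (Suc k) (\<lambda>xs. Some (f xs))"
    using assms(1) unfolding total_rec_def partial_rec_def by blast
  show ?thesis unfolding total_rec_def partial_rec_def computes_def
  proof (intro exI[of _ "Mini rf"] allI impI)
    fix xs :: "nat list" and v
    assume lx: "length xs = k"
    have ev: "eval rf (y # xs) u \<longleftrightarrow> u = f (y # xs)" for y u
      using rf lx unfolding computes_def by auto
    have "eval (Mini rf) xs v \<longleftrightarrow> f (v # xs) = 0 \<and> (\<forall>z<v. f (z # xs) \<noteq> 0)"
      unfolding eval_Mini_iff ev by (metis not0_implies_Suc nat.distinct(1))
    also have "\<dots> \<longleftrightarrow> v = (LEAST y. f (y # xs) = 0)"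
      using assms(2)[OF lx] by (metis (mono_tags, lifting) LeastI Least_equality not_less not_less_Least)
    finally show "eval (Mini rf) xs v \<longleftrightarrow> Some (LEAST y. f (y # xs) = 0) = Some v" by auto
  qed
qed

lemma total_rec_Suc: "total_rec k f \<Longrightarrow> total_rec k (\<lambda>xs. Suc (f xs))"
  by (rule total_rec_cong[OF total_rec_comp1[OF total_rec_succ]]) auto

lemma total_rec_const: "total_rec k (\<lambda>_. c)"
  by (induction c) (auto intro: total_rec_zero dest: total_rec_Suc)

lemma total_rec_add2: "total_rec 2 (\<lambda>xs. xs ! 0 + xs ! 1)"
proof -
  have "prec (\<lambda>ys. ys ! 0) (\<lambda>zs. Suc (zs ! 1)) m ys = m + ys ! 0" for m ys
    by (induction m) auto
  then have "total_rec (Suc 1) (\<lambda>xs. xs ! 0 + xs ! 1)"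
    by (intro total_rec_prim_rec[of 1 "\<lambda>ys. ys ! 0" "\<lambda>zs. Suc (zs ! 1)"] total_rec_proj total_rec_Suc) auto
  then show ?thesis by (simp add: numeral_2_eq_2)
qed

lemma total_rec_add: "total_rec k f \<Longrightarrow> total_rec k g \<Longrightarrow> total_rec k (\<lambda>xs. f xs + g xs)"
  by (rule total_rec_cong[OF total_rec_comp2[OF total_rec_add2]]) auto

lemma total_rec_pred1: "total_rec 1 (\<lambda>xs. xs ! 0 - 1)"
proof -
  have "prec (\<lambda>_. 0) (\<lambda>zs. zs ! 0) m ys = m - 1" for m ys
    by (induction m) auto
  then have "total_rec (Suc 0) (\<lambda>xs. xs ! 0 - 1)"
    by (intro total_rec_prim_rec[of 0 "\<lambda>_. 0" "\<lambda>zs. zs ! 0"] total_rec_proj total_rec_const) auto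
  then show ?thesis by simp
qed

lemma total_rec_pred: "total_rec k f \<Longrightarrow> total_rec k (\<lambda>xs. f xs - 1)"
  by (rule total_rec_cong[OF total_rec_comp1[OF total_rec_pred1]]) auto

lemma total_rec_diff2: "total_rec 2 (\<lambda>xs. xs ! 1 - xs ! 0)"
proof -
  have "prec (\<lambda>ys. ys ! 0) (\<lambda>zs. zs ! 1 - 1) m ys = ys ! 0 - m" for m ys
    by (induction m) auto
  then have "total_rec (Suc 1) (\<lambda>xs. xs ! 1 - xs ! 0)"
    by (intro total_rec_prim_rec[of 1 "\<lambda>ys. ys ! 0" "\<lambda>zs. zs ! 1 - 1"] total_rec_proj total_rec_pred) auto
  then show ?thesis by (simp add: numeral_2_eq_2)
qed

lemma total_rec_diff: "total_rec k f \<Longrightarrow> total_rec k g \<Longrightarrow> total_rec k (\<lambda>xs. f xs - g xs)"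
  by (rule total_rec_cong[OF total_rec_comp2[OF total_rec_diff2, of k g f]]) auto

lemma total_rec_triangle1: "total_rec 1 (\<lambda>xs. triangle (xs ! 0))"
proof -
  have "prec (\<lambda>_. 0) (\<lambda>zs. zs ! 1 + Suc (zs ! 0)) m ys = triangle m" for m ys
    by (induction m) auto
  then have "total_rec (Suc 0) (\<lambda>xs. triangle (xs ! 0))"
    by (intro total_rec_prim_rec[of 0 "\<lambda>_. 0" "\<lambda>zs. zs ! 1 + Suc (zs ! 0)"]
        total_rec_add total_rec_Suc total_rec_proj total_rec_const) auto
  then show ?thesis by simp
qed

lemma total_rec_triangle: "total_rec k f \<Longrightarrow> total_rec k (\<lambda>xs. triangle (f xs))"
  by (rule total_rec_cong[OF total_rec_comp1[OF total_rec_triangle1]]) auto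

lemma total_rec_pair: "total_rec k f \<Longrightarrow> total_rec k g \<Longrightarrow> total_rec k (\<lambda>xs. pair (f xs) (g xs))"
  unfolding prod_encode_def by (auto intro!: total_rec_add total_rec_triangle)

lemma total_rec_cond3: "total_rec 3 (\<lambda>xs. if xs ! 0 = 0 then xs ! 1 else xs ! 2)"
proof -
  have "prec (\<lambda>ys. ys ! 0) (\<lambda>zs. zs ! 3) m ys = (if m = 0 then ys ! 0 else ys ! 1)" for m ys
    by (cases m) auto
  then have "total_rec (Suc 2) (\<lambda>xs. if xs ! 0 = 0 then xs ! 1 else xs ! 2)"
    by (intro total_rec_prim_rec[of 2 "\<lambda>ys. ys ! 0" "\<lambda>zs. zs ! 3"] total_rec_proj) auto
  then show ?thesis by (simp add: numeral_3_eq_3)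
qed

lemma total_rec_cond:
  assumes "total_rec k c" "total_rec k f" "total_rec k g"
  shows "total_rec k (\<lambda>xs. if c xs = 0 then f xs else g xs)"
  by (rule total_rec_cong[OF total_rec_comp3[OF total_rec_cond3 assms]]) auto

lemma total_rec_if:
  "rec_pred k P \<Longrightarrow> total_rec k f \<Longrightarrow> total_rec k g \<Longrightarrow>
     total_rec k (\<lambda>xs. if P xs then f xs else g xs)"
  unfolding rec_pred_def
  by (rule total_rec_cong[OF total_rec_cond[of k "\<lambda>xs. if P xs then 1 else 0" g f]]) auto

lemma rec_pred_zero: "total_rec k f \<Longrightarrow> rec_pred k (\<lambda>xs. f xs = 0)"
  unfolding rec_pred_def by (rule total_rec_cond) (auto intro: total_rec_const)

lemma rec_pred_eq: "total_rec k f \<Longrightarrow> total_rec k g \<Longrightarrow> rec_pred k (\<lambda>xs. f xs = g xs)"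
  by (rule rec_pred_cong[OF rec_pred_zero[of k "\<lambda>xs. (f xs - g xs) + (g xs - f xs)"]])
    (auto intro: total_rec_add total_rec_diff)

lemma rec_pred_le: "total_rec k f \<Longrightarrow> total_rec k g \<Longrightarrow> rec_pred k (\<lambda>xs. f xs \<le> g xs)"
  by (rule rec_pred_cong[OF rec_pred_zero[of k "\<lambda>xs. f xs - g xs"]]) (auto intro: total_rec_diff)

lemma rec_pred_not: "rec_pred k P \<Longrightarrow> rec_pred k (\<lambda>xs. \<not> P xs)"
  unfolding rec_pred_def
  by (rule total_rec_cong[OF total_rec_if[of k P "\<lambda>_. 0" "\<lambda>_. 1"]])
    (auto simp: rec_pred_def intro: total_rec_const)

lemma rec_pred_less: "total_rec k f \<Longrightarrow> total_rec k g \<Longrightarrow> rec_pred k (\<lambda>xs. f xs < g xs)"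
  by (rule rec_pred_cong[OF rec_pred_not[OF rec_pred_le[of k g f]]]) auto

lemma rec_pred_conj: "rec_pred k P \<Longrightarrow> rec_pred k Q \<Longrightarrow> rec_pred k (\<lambda>xs. P xs \<and> Q xs)"
  unfolding rec_pred_def
  by (rule total_rec_cong[OF total_rec_if[of k P "\<lambda>xs. if Q xs then 1 else 0" "\<lambda>_. 0"]])
    (auto simp: rec_pred_def intro: total_rec_const)

lemma rec_pred_disj: "rec_pred k P \<Longrightarrow> rec_pred k Q \<Longrightarrow> rec_pred k (\<lambda>xs. P xs \<or> Q xs)"
  unfolding rec_pred_def
  by (rule total_rec_cong[OF total_rec_if[of k P "\<lambda>_. 1" "\<lambda>xs. if Q xs then 1 else 0"]])
    (auto simp: rec_pred_def intro: total_rec_const)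

lemma rec_pred_comp1:
  assumes "rec_pred 1 (\<lambda>xs. P (xs ! 0))" "total_rec k f"
  shows "rec_pred k (\<lambda>xs. P (f xs))"
  using total_rec_cong[OF total_rec_comp1[OF assms(1)[unfolded rec_pred_def] assms(2)]]
  unfolding rec_pred_def by auto

lemma rec_pred_comp2:
  assumes "rec_pred 2 (\<lambda>xs. P (xs ! 0) (xs ! 1))" "total_rec k f" "total_rec k g"
  shows "rec_pred k (\<lambda>xs. P (f xs) (g xs))"
  using total_rec_cong[OF total_rec_comp2[OF assms(1)[unfolded rec_pred_def] assms(2,3)]]
  unfolding rec_pred_def by auto

lemma rec_pred_bex2:
  assumes "rec_pred 2 (\<lambda>xs. P (xs ! 0) (xs ! 1))"
  shows "rec_pred 2 (\<lambda>xs. \<exists>j < xs ! 0. P j (xs ! 1))"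
proof -
  let ?g = "\<lambda>zs. if P (zs ! 0) (zs ! 2) \<or> zs ! 1 \<noteq> 0 then 1 else 0"
  have "rec_pred 3 (\<lambda>zs. P (zs ! 0) (zs ! 2) \<or> zs ! 1 \<noteq> 0)"
    by (intro rec_pred_disj rec_pred_comp2[OF assms] rec_pred_not rec_pred_eq total_rec_proj
        total_rec_const) simp_all
  moreover have "prec (\<lambda>_. 0) ?g m ys = (if \<exists>j<m. P j (ys ! 0) then 1 else 0)" for m ys
    by (induction m) (auto simp: less_Suc_eq)
  ultimately have "total_rec (Suc 1) (\<lambda>xs. if \<exists>j < xs ! 0. P j (xs ! 1) then 1 else 0)"
    by (intro total_rec_prim_rec[of 1 "\<lambda>_. 0" ?g] total_rec_const)
      (auto simp: rec_pred_def numeral_3_eq_3)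
  then show ?thesis unfolding rec_pred_def by (simp add: numeral_2_eq_2)
qed

lemma rec_pred_bex:
  "rec_pred 2 (\<lambda>xs. P (xs ! 0) (xs ! 1)) \<Longrightarrow> total_rec k b \<Longrightarrow> total_rec k a \<Longrightarrow>
     rec_pred k (\<lambda>xs. \<exists>j < b xs. P j (a xs))"
  using rec_pred_comp2[OF rec_pred_bex2] .

text \<open>The least d with z < triangle (d + 1), phrased with truncated subtraction so that it is a
  minimization of a recursive function.\<close>

definition triangle_root :: "nat \<Rightarrow> nat" where
  "triangle_root z = (LEAST d. Suc z - triangle (Suc d) = 0)"

lemma le_triangle: "n \<le> triangle n"
  by (induction n) auto

lemma total_rec_triangle_root1: "total_rec 1 (\<lambda>xs. triangle_root (xs ! 0))"
proof -
  have "total_rec 1 (\<lambda>xs. LEAST y. Suc ((y # xs) ! 1) - triangle (Suc ((y # xs) ! 0)) = 0)"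
  proof (rule total_rec_minimize)
    show "total_rec (Suc 1) (\<lambda>ys. Suc (ys ! 1) - triangle (Suc (ys ! 0)))"
      by (intro total_rec_diff total_rec_Suc total_rec_triangle total_rec_proj) auto
    show "\<exists>y. Suc ((y # xs) ! 1) - triangle (Suc ((y # xs) ! 0)) = 0" for xs :: "nat list"
      using le_triangle[of "Suc (xs ! 0)"] by (intro exI[of _ "xs ! 0"]) auto
  qed
  then show ?thesis by (rule total_rec_cong) (auto simp: triangle_root_def)
qed

lemma total_rec_triangle_root: "total_rec k f \<Longrightarrow> total_rec k (\<lambda>xs. triangle_root (f xs))"
  by (rule total_rec_cong[OF total_rec_comp1[OF total_rec_triangle_root1]]) auto

lemma triangle_root_bounds: "triangle (triangle_root z) \<le> z" "z < triangle (Suc (triangle_root z))"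
proof -
  have "Suc z - triangle (Suc z) = 0" using le_triangle[of "Suc z"] by linarith
  then have "Suc z - triangle (Suc (triangle_root z)) = 0"
    unfolding triangle_root_def by (rule LeastI)
  then show "z < triangle (Suc (triangle_root z))" by simp
  show "triangle (triangle_root z) \<le> z"
  proof (cases "triangle_root z")
    case (Suc d)
    then have "Suc z - triangle (Suc d) \<noteq> 0"
      using not_less_Least[of d "\<lambda>d. Suc z - triangle (Suc d) = 0"] unfolding triangle_root_def by auto
    then show ?thesis using Suc by auto
  qed simp
qed

lemma prod_decode_eq_triangle_root:
  "prod_decode z = (z - triangle (triangle_root z), triangle_root z - (z - triangle (triangle_root z)))"
proof -
  let ?d = "triangle_root z"
  let ?m = "z - triangle ?d"
  have "?m \<le> ?d" using triangle_root_bounds[of z] by auto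
  then have "pair ?m (?d - ?m) = z" using triangle_root_bounds[of z] by (simp add: prod_encode_def)
  then show ?thesis by (metis prod_encode_inverse)
qed

lemma total_rec_pfst: "total_rec k f \<Longrightarrow> total_rec k (\<lambda>xs. pfst (f xs))"
  unfolding prod_decode_eq_triangle_root by (auto intro!: total_rec_diff total_rec_triangle total_rec_triangle_root)

lemma total_rec_psnd: "total_rec k f \<Longrightarrow> total_rec k (\<lambda>xs. psnd (f xs))"
  unfolding prod_decode_eq_triangle_root by (auto intro!: total_rec_diff total_rec_triangle total_rec_triangle_root)

lemma partial_computable_iff_partial_rec:
  "partial_computable F \<longleftrightarrow> partial_rec 1 (\<lambda>xs. F (xs ! 0))"
proof -
  have "(\<forall>xs v. length xs = 1 \<longrightarrow> (eval r xs v \<longleftrightarrow> F (xs ! 0) = Some v)) \<longleftrightarrow>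
        (\<forall>x v. eval r [x] v \<longleftrightarrow> F x = Some v)" for r
    by (metis (no_types, opaque_lifting) length_0_conv length_Suc_conv One_nat_def
        length_Cons list.size(3) nth_Cons_0)
  then show ?thesis unfolding partial_computable_def partial_rec_def computes_def by simp
qed

lemma total_computable_iff_total_rec: "total_computable s \<longleftrightarrow> total_rec 1 (\<lambda>xs. s (xs ! 0))"
  unfolding total_computable_def total_rec_def partial_computable_iff_partial_rec by simp

lemma total_rec_total_computable:
  assumes "total_computable s" "total_rec k f"
  shows "total_rec k (\<lambda>xs. s (f xs))"
  by (rule total_rec_cong[OF total_rec_comp1[OF assms(1)[unfolded total_computable_iff_total_rec] assms(2)]])
    auto

lemma partial_rec_partial_computable:
  assumes "partial_computable U" "total_rec k f"
  shows "partial_rec k (\<lambda>xs. U (f xs))"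
proof -
  have "partial_rec k (\<lambda>xs. if \<forall>F\<in>set [\<lambda>xs. Some (f xs)]. F xs \<noteq> None
      then (\<lambda>ys. U (ys ! 0)) (map (\<lambda>F. the (F xs)) [\<lambda>xs. Some (f xs)]) else None)"
    by (rule partial_rec_comp) (use assms in \<open>auto simp: partial_computable_iff_partial_rec total_rec_def\<close>)
  then show ?thesis by (rule partial_rec_cong) auto
qed

lemma partial_rec_bind:
  assumes "partial_computable U" "partial_rec k F" "total_rec k g"
  shows "partial_rec k (\<lambda>xs. case F xs of None \<Rightarrow> None | Some v \<Rightarrow> U (pair v (g xs)))"
proof -
  have "partial_rec 2 (\<lambda>ys. U (pair (ys ! 0) (ys ! 1)))"
    by (rule partial_rec_partial_computable[OF assms(1)]) (intro total_rec_pair total_rec_proj; simp)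
  then have "partial_rec k (\<lambda>xs. if \<forall>F\<in>set [F, \<lambda>xs. Some (g xs)]. F xs \<noteq> None
      then (\<lambda>ys. U (pair (ys ! 0) (ys ! 1))) (map (\<lambda>F. the (F xs)) [F, \<lambda>xs. Some (g xs)]) else None)"
    by (intro partial_rec_comp) (use assms in \<open>auto simp: total_rec_def numeral_2_eq_2\<close>)
  then show ?thesis by (rule partial_rec_cong) (auto split: option.splits)
qed

lemma total_computable_pfst: "total_computable pfst"
  unfolding total_computable_iff_total_rec by (intro total_rec_pfst total_rec_proj) simp

lemma decidable_set_iff_rec_pred: "decidable_set A \<longleftrightarrow> rec_pred 1 (\<lambda>xs. xs ! 0 \<in> A)"
  unfolding decidable_set_def total_computable_iff_total_rec rec_pred_def by simp

section \<open>Closure properties of the arithmetical hierarchy\<close>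

lemma decidable_set_Compl: "decidable_set A \<Longrightarrow> decidable_set (- A)"
  unfolding decidable_set_iff_rec_pred by (rule rec_pred_cong[OF rec_pred_not]) auto

lemma decidable_set_vimage:
  assumes "decidable_set A" "total_computable f"
  shows "decidable_set (f -` A)"
  using rec_pred_comp1[OF assms(1)[unfolded decidable_set_iff_rec_pred]
      assms(2)[unfolded total_computable_iff_total_rec]]
  unfolding decidable_set_iff_rec_pred by simp

lemma arith_sigma_vimage: "arith_sigma n A \<Longrightarrow> total_computable f \<Longrightarrow> arith_sigma n (f -` A)"
proof (induction n arbitrary: A f)
  case 0
  then show ?case by (auto intro: decidable_set_vimage)
next
  case (Suc n)
  from Suc.prems obtain B where B: "arith_sigma n (- B)" "A = {x. \<exists>y. pair x y \<in> B}" by auto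
  define h where "h z = pair (f (pfst z)) (psnd z)" for z
  have "total_computable h" unfolding total_computable_iff_total_rec h_def
    by (intro total_rec_pair total_rec_total_computable[OF Suc.prems(2)] total_rec_pfst total_rec_psnd
        total_rec_proj) simp_all
  then have "arith_sigma n (- (h -` B))" using Suc.IH[OF B(1)] by (simp add: vimage_Compl)
  moreover have "f -` A = {x. \<exists>y. pair x y \<in> h -` B}" using B(2) by (auto simp: h_def)
  ultimately show ?case by auto
qed

lemma arith_sigma_Int_Un:
  "arith_sigma n A \<Longrightarrow> arith_sigma n B \<Longrightarrow> arith_sigma n (A \<inter> B) \<and> arith_sigma n (A \<union> B)"
proof (induction n arbitrary: A B)
  case 0
  then show ?case by (auto simp: decidable_set_iff_rec_pred intro: rec_pred_conj rec_pred_disj)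
next
  case (Suc n)
  from Suc.prems obtain BA BB where
    BA: "arith_sigma n (- BA)" "A = {x. \<exists>y. pair x y \<in> BA}" and
    BB: "arith_sigma n (- BB)" "B = {x. \<exists>y. pair x y \<in> BB}"
    by auto
  \<comment> \<open>a single witness codes the pair of witnesses for A and B\<close>
  define h1 where "h1 z = pair (pfst z) (pfst (psnd z))" for z
  define h2 where "h2 z = pair (pfst z) (psnd (psnd z))" for z
  have "total_computable h1" "total_computable h2"
    unfolding total_computable_iff_total_rec h1_def h2_def
    by (intro total_rec_pair total_rec_pfst total_rec_psnd total_rec_proj; simp)+
  then have "arith_sigma n (h1 -` (- BA) \<union> h2 -` (- BB))"
    using Suc.IH arith_sigma_vimage BA(1) BB(1) by blast
  then have "arith_sigma n (- (h1 -` BA \<inter> h2 -` BB))" by (simp add: vimage_Compl)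
  moreover have "A \<inter> B = {x. \<exists>y. pair x y \<in> h1 -` BA \<inter> h2 -` BB}"
  proof (intro set_eqI iffI)
    fix x
    assume "x \<in> A \<inter> B"
    then obtain y1 y2 where "pair x y1 \<in> BA" "pair x y2 \<in> BB" using BA BB by auto
    then show "x \<in> {x. \<exists>y. pair x y \<in> h1 -` BA \<inter> h2 -` BB}"
      by (auto simp: h1_def h2_def intro!: exI[of _ "pair y1 y2"])
  qed (use BA BB in \<open>auto simp: h1_def h2_def\<close>)
  ultimately have "arith_sigma (Suc n) (A \<inter> B)" by (simp only: arith_sigma.simps) blast
  moreover have "arith_sigma n (- (BA \<union> BB))" using Suc.IH BA(1) BB(1) by simp
  then have "arith_sigma (Suc n) (A \<union> B)"
    using BA(2) BB(2) by (auto intro!: exI[of _ "BA \<union> BB"])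
  ultimately show ?case by simp
qed

lemma decidable_set_arith_sigma: "decidable_set A \<Longrightarrow> arith_sigma n A"
proof (induction n arbitrary: A)
  case (Suc n)
  have "decidable_set (- (pfst -` A))"
    using decidable_set_vimage[OF decidable_set_Compl[OF Suc.prems] total_computable_pfst]
    by (simp add: vimage_Compl)
  then have "arith_sigma n (- (pfst -` A))" by (rule Suc.IH)
  moreover have "A = {x. \<exists>y. pair x y \<in> pfst -` A}" by auto
  ultimately show ?case by auto
qed simp

lemma decidable_set_arith_pi: "decidable_set A \<Longrightarrow> arith_pi n A"
  unfolding arith_pi_def by (rule decidable_set_arith_sigma[OF decidable_set_Compl])

lemma arith_pi_vimage: "arith_pi n A \<Longrightarrow> total_computable f \<Longrightarrow> arith_pi n (f -` A)"
  unfolding arith_pi_def using arith_sigma_vimage by (metis vimage_Compl)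

lemma arith_pi_Int: "arith_pi n A \<Longrightarrow> arith_pi n B \<Longrightarrow> arith_pi n (A \<inter> B)"
  unfolding arith_pi_def using arith_sigma_Int_Un by (metis Compl_Int)

lemma arith_pi_Un: "arith_pi n A \<Longrightarrow> arith_pi n B \<Longrightarrow> arith_pi n (A \<union> B)"
  unfolding arith_pi_def using arith_sigma_Int_Un by (metis Compl_Un)

section \<open>Padding in acceptable numberings\<close>

lemma unbounded_non_repeating:
  fixes t :: "nat \<Rightarrow> nat" and F :: "nat \<Rightarrow> 'a"
  assumes F_t: "\<And>k. F (t k) = (if \<exists>j<k. t j = t k then g k else c)" and "inj g"
  shows "\<exists>k. \<not> (\<exists>j<k. t j = t k) \<and> M \<le> t k"
proof -
  let ?R = "g -` {c}"
  have repeating: "k \<in> ?R" if "\<exists>j<k. t j = t k" for k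
  proof -
    define j0 where "j0 = (LEAST j. t j = t k)"
    have "t j0 = t k" unfolding j0_def by (rule LeastI[of _ k]) (rule refl)
    then have j0_fresh: "(\<exists>j<j0. t j = t j0) = False" using not_less_Least unfolding j0_def by metis
    have "F (t j0) = c" using F_t[of j0] by (simp only: j0_fresh if_False)
    moreover have "F (t k) = g k" using F_t[of k] that by simp
    ultimately show ?thesis using \<open>t j0 = t k\<close> by simp
  qed
  have "inj_on t (- ?R)"
  proof (rule inj_onI)
    fix x y
    assume "x \<in> - ?R" "y \<in> - ?R" "t x = t y"
    then show "x = y" using repeating by (metis ComplD linorder_neqE_nat)
  qed
  moreover have "finite ?R" using \<open>inj g\<close> by (intro finite_vimageI) simp_all
  then have "infinite (- ?R)"
    unfolding Compl_eq_Diff_UNIV using Diff_infinite_finite infinite_UNIV_nat by blast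
  ultimately have "infinite (t ` (- ?R))" using finite_imageD by blast
  then obtain k where "k \<in> - ?R" "\<not> t k \<le> M"
    unfolding finite_nat_set_iff_bounded_le by blast
  then show ?thesis using repeating by (intro exI[of _ k]) auto
qed

lemma rec_pred_repeats:
  assumes t: "total_rec 2 (\<lambda>xs. t (xs ! 0) (xs ! 1))" and "total_rec k fa" "total_rec k fk"
  shows "rec_pred k (\<lambda>xs. \<exists>j<fk xs. t (fa xs) j = t (fa xs) (fk xs))"
proof -
  have "rec_pred 2 (\<lambda>xs. t (pfst (xs ! 1)) (xs ! 0) = t (pfst (xs ! 1)) (psnd (xs ! 1)))"
    by (intro rec_pred_eq total_rec_binary[OF t] total_rec_pfst total_rec_psnd total_rec_proj; simp)
  from rec_pred_bex[OF this assms(3) total_rec_pair[OF assms(2,3)]] show ?thesis by simp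
qed

lemma strict_mono_selection:
  assumes u: "total_rec 2 (\<lambda>xs. u (xs ! 0) (xs ! 1))" and large: "\<And>a M. M \<le> u a M"
  obtains p where "total_computable p" "strict_mono p" "\<And>w. \<exists>M. p w = u (pfst w) M"
proof
  \<comment> \<open>bound (w + 1) = p w + 1, which makes p strictly increasing\<close>
  define g where "g zs = Suc (u (pfst (zs ! 0)) (zs ! 1))" for zs
  define bound where "bound w = prec (\<lambda>_. 0) g w []" for w
  define p where "p w = u (pfst w) (bound w)" for w
  have "total_rec (Suc 0) (\<lambda>xs. bound (xs ! 0))"
    unfolding bound_def g_def
    by (rule total_rec_prim_rec) (auto intro!: total_rec_const total_rec_Suc total_rec_binary[OF u]
        total_rec_pfst total_rec_proj)
  then show "total_computable p"
    unfolding total_computable_iff_total_rec p_def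
    by (intro total_rec_binary[OF u] total_rec_pfst total_rec_proj) auto
  have "p w < p (Suc w)" for w
    using large[of "bound (Suc w)" "pfst (Suc w)"] by (simp add: p_def bound_def g_def)
  then show "strict_mono p" unfolding strict_mono_Suc_iff ..
  show "\<exists>M. p w = u (pfst w) M" for w unfolding p_def by blast
qed

context
  fixes \<phi> :: "nat \<Rightarrow> nat \<Rightarrow> nat option"
  assumes acc: "acceptable_numbering \<phi>"
begin

lemma partial_rec_numbering:
  assumes "total_rec k f" "total_rec k g"
  shows "partial_rec k (\<lambda>xs. \<phi> (f xs) (g xs))"
proof -
  have "partial_computable (\<lambda>z. case prod_decode z of (x, y) \<Rightarrow> \<phi> x y)"
    using acc unfolding acceptable_numbering_def partial_computable2_def by blast
  from partial_rec_partial_computable[OF this total_rec_pair[OF assms]] show ?thesis by simp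
qed

lemma smn_index:
  assumes "partial_rec 1 (\<lambda>xs. g (pfst (xs ! 0)) (psnd (xs ! 0)))"
  shows "\<exists>s. total_computable s \<and> (\<forall>x y. \<phi> (s x) y = g x y)"
proof -
  have "partial_computable2 g" unfolding partial_computable2_def partial_computable_iff_partial_rec
    by (rule partial_rec_cong[OF assms]) (simp add: case_prod_beta)
  then show ?thesis using acc unfolding acceptable_numbering_def by blast
qed

lemma recursion_theorem:
  assumes f: "total_computable f"
  shows "\<exists>e. \<phi> e = \<phi> (f e)"
proof -
  let ?U = "\<lambda>z. case prod_decode z of (x, y) \<Rightarrow> \<phi> x y"
  have U: "partial_computable ?U"
    using acc unfolding acceptable_numbering_def partial_computable2_def by blast
  have "\<exists>d. total_computable d \<and>
      (\<forall>x y. \<phi> (d x) y = (case \<phi> x x of None \<Rightarrow> None | Some j \<Rightarrow> \<phi> j y))"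
  proof (rule smn_index)
    have "partial_rec 1 (\<lambda>xs. case \<phi> (pfst (xs ! 0)) (pfst (xs ! 0)) of None \<Rightarrow> None
        | Some v \<Rightarrow> ?U (pair v (psnd (xs ! 0))))"
      by (rule partial_rec_bind[OF U])
        (intro partial_rec_numbering total_rec_pfst total_rec_psnd total_rec_proj; simp)+
    then show "partial_rec 1 (\<lambda>xs. case \<phi> (pfst (xs ! 0)) (pfst (xs ! 0)) of None \<Rightarrow> None
        | Some j \<Rightarrow> \<phi> j (psnd (xs ! 0)))"
      by (rule partial_rec_cong) (simp split: option.splits)
  qed
  then obtain d where d: "total_computable d"
    "\<And>x y. \<phi> (d x) y = (case \<phi> x x of None \<Rightarrow> None | Some j \<Rightarrow> \<phi> j y)"
    by blast
  have "\<exists>s. total_computable s \<and> (\<forall>x y. \<phi> (s x) y = Some (f (d y)))"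
    by (rule smn_index, unfold total_rec_def[symmetric])
      (intro total_rec_total_computable[OF f] total_rec_total_computable[OF d(1)] total_rec_psnd
        total_rec_proj; simp)
  then obtain s :: "nat \<Rightarrow> nat" where s: "\<And>x y. \<phi> (s x) y = Some (f (d y))" by blast
  \<comment> \<open>s 0 is an index of f \<circ> d, so d (s 0) is a fixed point\<close>
  have "\<phi> (d (s 0)) y = \<phi> (f (d (s 0))) y" for y using d(2)[of "s 0" y] s[of 0 "s 0"] by simp
  then show ?thesis by blast
qed

lemma curried_index:
  "\<exists>s. total_computable s \<and> (\<forall>z y. \<phi> (s z) y = \<phi> (pfst z) (pair (psnd z) y))"
  by (rule smn_index)
    (intro partial_rec_numbering total_rec_pair total_rec_pfst total_rec_psnd total_rec_proj; simp)

lemma constant_index: "\<exists>s. total_computable s \<and> (\<forall>k y. \<phi> (s k) y = Some k)"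
  by (rule smn_index, unfold total_rec_def[symmetric]) (intro total_rec_pfst total_rec_proj; simp)

lemma padding_candidates:
  obtains t where "total_rec 2 (\<lambda>xs. t (xs ! 0) (xs ! 1))"
    "\<And>a k. \<phi> (t a k) = (if \<exists>j<k. t a j = t a k then (\<lambda>_. Some k) else \<phi> a)"
proof -
  obtain s0 where s0: "total_computable s0" "\<And>z y. \<phi> (s0 z) y = \<phi> (pfst z) (pair (psnd z) y)"
    using curried_index by blast
  obtain const where const: "total_computable const" "\<And>k y. \<phi> (const k) y = Some k"
    using constant_index by blast
  define C where "C x a k \<longleftrightarrow> (\<exists>j<k. s0 (pair x (pair a j)) = s0 (pair x (pair a k)))" for x a k
  have C: "rec_pred 1 (\<lambda>xs. C (fx xs) (fa xs) (fk xs))"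
    if "total_rec 1 fx" "total_rec 1 fa" "total_rec 1 fk" for fx fa fk
  proof -
    have "total_rec 2 (\<lambda>xs. s0 (pair (pfst (xs ! 0)) (pair (psnd (xs ! 0)) (xs ! 1))))"
      by (intro total_rec_total_computable[OF s0(1)] total_rec_pair total_rec_pfst total_rec_psnd
          total_rec_proj; simp)
    from rec_pred_repeats[OF this total_rec_pair[OF that(1,2)] that(3)] show ?thesis
      unfolding C_def by simp
  qed
  \<comment> \<open>with a fixed point e of s1, the index t a k = s0 \<langle>e, \<langle>a, k\<rangle>\<rangle> computes the constant k
    if it repeats an earlier t a j, and the same function as a otherwise\<close>
  have "\<exists>s1. total_computable s1 \<and> (\<forall>x z. \<phi> (s1 x) z =
      \<phi> (if C x (pfst (pfst z)) (psnd (pfst z)) then const (psnd (pfst z)) else pfst (pfst z)) (psnd z))"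
    by (rule smn_index)
      (intro partial_rec_numbering total_rec_if C total_rec_total_computable[OF const(1)]
        total_rec_pfst total_rec_psnd total_rec_proj; simp)
  then obtain s1 where s1: "total_computable s1" "\<And>x z. \<phi> (s1 x) z =
      \<phi> (if C x (pfst (pfst z)) (psnd (pfst z)) then const (psnd (pfst z)) else pfst (pfst z)) (psnd z)"
    by blast
  obtain e where e: "\<phi> e = \<phi> (s1 e)" using recursion_theorem[OF s1(1)] by blast
  define t where "t a k = s0 (pair e (pair a k))" for a k
  show ?thesis
  proof
    show "total_rec 2 (\<lambda>xs. t (xs ! 0) (xs ! 1))" unfolding t_def
      by (intro total_rec_total_computable[OF s0(1)] total_rec_pair total_rec_const total_rec_proj) auto
    fix a k
    have "\<phi> (t a k) = \<phi> (if C e a k then const k else a)"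
      unfolding t_def by (rule ext) (simp add: s0(2) e s1(2))
    moreover have "\<phi> (const k) = (\<lambda>_. Some k)" using const(2) by blast
    ultimately show "\<phi> (t a k) = (if \<exists>j<k. t a j = t a k then (\<lambda>_. Some k) else \<phi> a)"
      unfolding C_def t_def by auto
  qed
qed

lemma unbounded_padding:
  obtains u where "total_rec 2 (\<lambda>xs. u (xs ! 0) (xs ! 1))" "\<And>a M. \<phi> (u a M) = \<phi> a"
    "\<And>a M. M \<le> u a M"
proof -
  obtain t where t: "total_rec 2 (\<lambda>xs. t (xs ! 0) (xs ! 1))"
    "\<And>a k. \<phi> (t a k) = (if \<exists>j<k. t a j = t a k then (\<lambda>_. Some k) else \<phi> a)"
    using padding_candidates by blast
  define good where "good a M k \<longleftrightarrow> \<not> (\<exists>j<k. t a j = t a k) \<and> M \<le> t a k" for a M k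
  have good_ex: "\<exists>k. good a M k" for a M
    unfolding good_def
    by (rule unbounded_non_repeating[where F = \<phi> and g = "\<lambda>k _. Some k"], fact t(2))
      (auto simp: inj_def fun_eq_iff)
  let ?f = "\<lambda>ys. if good (ys ! 1) (ys ! 2) (ys ! 0) then 0 else 1 :: nat"
  have "total_rec 2 (\<lambda>xs. LEAST k. ?f (k # xs) = 0)"
  proof (rule total_rec_minimize[of 2 ?f])
    show "total_rec (Suc 2) ?f"
      unfolding good_def
      by (intro total_rec_if rec_pred_conj rec_pred_not rec_pred_repeats[OF t(1)] rec_pred_le
          total_rec_binary[OF t(1)] total_rec_proj total_rec_const; simp)
  qed (use good_ex in simp)
  then have least_good: "total_rec 2 (\<lambda>xs. LEAST k. good (xs ! 0) (xs ! 1) k)"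
    by (rule total_rec_cong) simp
  show ?thesis
  proof
    show "total_rec 2 (\<lambda>xs. t (xs ! 0) (LEAST k. good (xs ! 0) (xs ! 1) k))"
      by (intro total_rec_binary[OF t(1)] least_good total_rec_proj) auto
    fix a M
    let ?k = "LEAST k. good a M k"
    have "good a M ?k" using good_ex by (rule LeastI_ex)
    then have fresh: "(\<exists>j<?k. t a j = t a ?k) = False" and "M \<le> t a ?k" unfolding good_def by blast+
    then show "M \<le> t a ?k" by blast
    show "\<phi> (t a ?k) = \<phi> a" using t(2)[of a ?k] unfolding fresh if_False .
  qed
qed

lemma padding:
  obtains p where "total_computable p" "strict_mono p" "\<And>w. \<phi> (p w) = \<phi> (pfst w)"
proof -
  obtain u where u: "total_rec 2 (\<lambda>xs. u (xs ! 0) (xs ! 1))" "\<And>a M. \<phi> (u a M) = \<phi> a"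
    "\<And>a M. M \<le> u a M"
    using unbounded_padding by blast
  obtain p where "total_computable p" "strict_mono p" "\<And>w. \<exists>M. p w = u (pfst w) M"
    using strict_mono_selection[OF u(1,3)] by blast
  then show ?thesis using that u(2) by metis
qed

end

section \<open>Graphs of diameter 2\<close>

lemma rel_code_eq: "rel_code R = {c. (pfst c, psnd c) \<in> R}"
  unfolding rel_code_def by (force simp: image_iff)

lemma has_diameter_2I:
  assumes within_2: "\<And>x y. (x, y) \<in> G\<^sup>* \<Longrightarrow> x = y \<or> (x, y) \<in> G \<or> (x, y) \<in> G O G"
    and "(x, y) \<in> G\<^sup>*" "x \<noteq> y" "(x, y) \<notin> G"
  shows "has_diameter G 2"
  unfolding has_diameter_def
proof (intro conjI allI impI)
  fix u v
  assume "(u, v) \<in> G\<^sup>*"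
  then have "(u, v) \<in> G ^^ 0 \<or> (u, v) \<in> G ^^ 1 \<or> (u, v) \<in> G ^^ 2"
    using within_2 by (auto simp: numeral_2_eq_2)
  then show "\<exists>j\<le>2. (u, v) \<in> G ^^ j" using one_le_numeral zero_le by blast
next
  fix k' :: nat
  assume "k' < 2"
  have "(x, y) \<notin> G ^^ j" if "j \<le> k'" for j
  proof -
    have "j = 0 \<or> j = 1" using that \<open>k' < 2\<close> by linarith
    then show ?thesis using assms(3,4) by auto
  qed
  then have "\<not> (\<exists>j\<le>k'. (x, y) \<in> G ^^ j)" by blast
  then show "\<not> (\<forall>u v. (u, v) \<in> G\<^sup>* \<longrightarrow> (\<exists>j\<le>k'. (u, v) \<in> G ^^ j))" using assms(2) by blast
qed

locale padded_sigma_equivalence =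
  fixes E :: "(nat \<times> nat) set" and n :: nat and B :: "nat set" and p :: "nat \<Rightarrow> nat"
  assumes equiv_E: "equiv UNIV E"
    and arith_pi_B: "arith_pi n B"
    and E_iff_witness: "(a, b) \<in> E \<longleftrightarrow> (\<exists>y. pair (pair a b) y \<in> B)"
    and total_computable_p: "total_computable p"
    and strict_mono_p: "strict_mono p"
    and p_in_E: "(p w, pfst w) \<in> E"
begin

lemma E_refl: "(a, a) \<in> E"
  using equiv_E by (simp add: equiv_def refl_on_def)

lemma E_sym: "(a, b) \<in> E \<Longrightarrow> (b, a) \<in> E"
  using equiv_E by (meson equiv_def symD)

lemma E_trans: "(a, b) \<in> E \<Longrightarrow> (b, c) \<in> E \<Longrightarrow> (a, c) \<in> E"
  using equiv_E by (meson equiv_def transD)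

definition unpad :: "nat \<Rightarrow> nat" where
  "unpad z = (LEAST w. p w = z \<or> z < w)"

lemma unpad_p [simp]: "unpad (p w) = w"
  unfolding unpad_def
proof (rule Least_equality)
  fix w'
  assume "p w' = p w \<or> p w < w'"
  then show "w \<le> w'"
    using strict_mono_eq[OF strict_mono_p] strict_mono_imp_increasing[OF strict_mono_p, of w] by auto
qed simp

lemma total_computable_unpad: "total_computable unpad"
proof -
  let ?f = "\<lambda>ys. if p (ys ! 0) = ys ! 1 \<or> ys ! 1 < ys ! 0 then 0 else 1 :: nat"
  have "total_rec 1 (\<lambda>xs. LEAST w. ?f (w # xs) = 0)"
  proof (rule total_rec_minimize[of 1 ?f])
    show "total_rec (Suc 1) ?f"
      by (intro total_rec_if rec_pred_disj rec_pred_eq rec_pred_less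
          total_rec_total_computable[OF total_computable_p] total_rec_proj total_rec_const; simp)
  qed (auto intro: exI[of _ "Suc _"])
  then show ?thesis
    unfolding total_computable_iff_total_rec by (rule total_rec_cong) (simp add: unpad_def)
qed

text \<open>The vertex p \<langle>a, \<langle>b, \<langle>y, i\<rangle>\<rangle>\<rangle>, where y witnesses (a, b) \<in> E, is E-equivalent to a and
  is attached to both a and b; the component i provides infinitely many such vertices.\<close>

definition attached :: "nat \<Rightarrow> nat \<Rightarrow> bool" where
  "attached x z \<longleftrightarrow> p (unpad z) = z \<and> (x = pfst (unpad z) \<or> x = pfst (psnd (unpad z))) \<and>
     pair (pair (pfst (unpad z)) (pfst (psnd (unpad z)))) (pfst (psnd (psnd (unpad z)))) \<in> B"

definition witness_graph :: "(nat \<times> nat) set" where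
  "witness_graph = {(x, z). x \<noteq> z \<and> (attached x z \<or> attached z x)}"

lemma simple_graph_witness_graph: "simple_graph witness_graph"
  unfolding simple_graph_def sym_def irrefl_def witness_graph_def by auto

lemma attached_p:
  "attached x (p w) \<longleftrightarrow>
     (x = pfst w \<or> x = pfst (psnd w)) \<and> pair (pair (pfst w) (pfst (psnd w))) (pfst (psnd (psnd w))) \<in> B"
  unfolding attached_def by simp

lemma attached_in_E:
  assumes "attached x z"
  shows "(x, z) \<in> E"
proof -
  from assms obtain w where z: "z = p w" unfolding attached_def by metis
  have "(pfst w, pfst (psnd w)) \<in> E" using assms unfolding z attached_p E_iff_witness by blast
  moreover have "(pfst w, z) \<in> E" unfolding z by (rule E_sym[OF p_in_E])
  moreover have "x = pfst w \<or> x = pfst (psnd w)" using assms unfolding z attached_p by blast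
  ultimately show ?thesis using E_sym E_trans by blast
qed

lemma rtrancl_witness_graph_subset: "witness_graph\<^sup>* \<subseteq> E"
proof (rule subrelI)
  fix a b
  assume "(a, b) \<in> witness_graph\<^sup>*"
  then show "(a, b) \<in> E"
  proof (induction rule: rtrancl_induct)
    case (step y z)
    then have "(y, z) \<in> E" unfolding witness_graph_def using attached_in_E E_sym by blast
    with step.IH show ?case by (rule E_trans)
  qed (rule E_refl)
qed

lemma E_within_2:
  assumes "(a, b) \<in> E"
  shows "a = b \<or> (a, b) \<in> witness_graph \<or> (a, b) \<in> witness_graph O witness_graph"
proof -
  obtain y where "pair (pair a b) y \<in> B" using assms E_iff_witness by blast
  then have "attached a (p (pair a (pair b (pair y 0))))" "attached b (p (pair a (pair b (pair y 0))))"
    unfolding attached_p by simp_all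
  then obtain c where "attached a c" "attached b c" by blast
  then have "(a, c) \<in> witness_graph \<or> a = c" "(c, b) \<in> witness_graph \<or> c = b"
    unfolding witness_graph_def by auto
  then show ?thesis by auto
qed

lemma rtrancl_witness_graph: "witness_graph\<^sup>* = E"
proof
  show "E \<subseteq> witness_graph\<^sup>*"
  proof (rule subrelI)
    fix a b
    assume "(a, b) \<in> E"
    then consider "a = b" | "(a, b) \<in> witness_graph" | "(a, b) \<in> witness_graph O witness_graph"
      using E_within_2 by blast
    then show "(a, b) \<in> witness_graph\<^sup>*"
      by cases (auto intro: rtrancl_trans[OF r_into_rtrancl r_into_rtrancl])
  qed
qed (rule rtrancl_witness_graph_subset)

lemma has_diameter_witness_graph: "has_diameter witness_graph 2"
proof (rule has_diameter_2I)
  show "x = y \<or> (x, y) \<in> witness_graph \<or> (x, y) \<in> witness_graph O witness_graph"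
    if "(x, y) \<in> witness_graph\<^sup>*" for x y
    using that E_within_2 unfolding rtrancl_witness_graph by blast
  \<comment> \<open>two padded copies of 0: both are equivalent to 0, but neither is an endpoint of the other\<close>
  let ?w = "\<lambda>i. pair 0 (pair 0 i)"
  have "(p (?w i), 0) \<in> E" for i using p_in_E[of "?w i"] by simp
  then have "(p (?w 1), p (?w 2)) \<in> E" using E_sym E_trans by blast
  then show "(p (?w 1), p (?w 2)) \<in> witness_graph\<^sup>*" unfolding rtrancl_witness_graph .
  show "p (?w 1) \<noteq> p (?w 2)" using strict_mono_eq[OF strict_mono_p] by simp
  have "0 < p (?w i)" if "0 < i" for i
    using strict_mono_imp_increasing[OF strict_mono_p, of "?w i"] le_prod_encode_2[where a = 0 and b = i]
      le_prod_encode_2[where a = 0 and b = "pair 0 i"] that by linarith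
  then have "0 < p (?w 1)" "0 < p (?w 2)" by simp_all
  then show "(p (?w 1), p (?w 2)) \<notin> witness_graph" unfolding witness_graph_def by (auto simp: attached_p)
qed

lemma arith_pi_attached: "arith_pi n {c. attached (pfst c) (psnd c)}"
proof -
  let ?u = "\<lambda>c. unpad (psnd c)"
  define D where "D = {c. p (?u c) = psnd c \<and> (pfst c = pfst (?u c) \<or> pfst c = pfst (psnd (?u c)))}"
  define h where "h c = pair (pair (pfst (?u c)) (pfst (psnd (?u c)))) (pfst (psnd (psnd (?u c))))" for c
  have "decidable_set D" unfolding decidable_set_iff_rec_pred D_def mem_Collect_eq
    by (intro rec_pred_conj rec_pred_disj rec_pred_eq
        total_rec_total_computable[OF total_computable_p]
        total_rec_total_computable[OF total_computable_unpad]
        total_rec_pfst total_rec_psnd total_rec_proj; simp)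
  moreover have "total_computable h" unfolding total_computable_iff_total_rec h_def
    by (intro total_rec_pair total_rec_total_computable[OF total_computable_unpad] total_rec_pfst
        total_rec_psnd total_rec_proj; simp)
  moreover have "{c. attached (pfst c) (psnd c)} = D \<inter> h -` B"
    unfolding attached_def D_def h_def by auto
  ultimately show ?thesis
    using arith_pi_Int[OF decidable_set_arith_pi arith_pi_vimage[OF arith_pi_B]] by simp
qed

lemma arith_pi_rel_code_witness_graph: "arith_pi n (rel_code witness_graph)"
proof -
  let ?A = "{c. attached (pfst c) (psnd c)}"
  define swap where "swap c = pair (psnd c) (pfst c)" for c
  have "total_computable swap" unfolding total_computable_iff_total_rec swap_def
    by (intro total_rec_pair total_rec_pfst total_rec_psnd total_rec_proj; simp)
  moreover have "decidable_set {c. pfst c \<noteq> psnd c}"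
    unfolding decidable_set_iff_rec_pred mem_Collect_eq
    by (intro rec_pred_not rec_pred_eq total_rec_pfst total_rec_psnd total_rec_proj; simp)
  moreover have "rel_code witness_graph = {c. pfst c \<noteq> psnd c} \<inter> (?A \<union> swap -` ?A)"
    unfolding rel_code_eq witness_graph_def swap_def by auto
  moreover have "arith_pi n (?A \<union> swap -` ?A)"
    using arith_pi_Un[OF arith_pi_attached arith_pi_vimage[OF arith_pi_attached]] calculation(1) .
  ultimately show ?thesis using arith_pi_Int[OF decidable_set_arith_pi] by simp
qed

end

lemma graphable_with_diameter_2_if_padded:
  assumes "equiv UNIV E" "arith_sigma (Suc n) (rel_code E)"
    and "total_computable p" "strict_mono p" "\<And>w. (p w, pfst w) \<in> E"
  shows "graphable_with_diameter (arith_pi n) E 2"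
proof -
  obtain B where B: "arith_pi n B" "rel_code E = {x. \<exists>y. pair x y \<in> B}"
    using assms(2) unfolding arith_pi_def by auto
  have "(a, b) \<in> E \<longleftrightarrow> pair a b \<in> rel_code E" for a b
    unfolding rel_code_eq by simp
  then have "(a, b) \<in> E \<longleftrightarrow> (\<exists>y. pair (pair a b) y \<in> B)" for a b
    unfolding B(2) by simp
  then interpret padded_sigma_equivalence E n B p
    using assms B(1) by unfold_locales blast+
  show ?thesis unfolding graphable_with_diameter_def
    using arith_pi_rel_code_witness_graph simple_graph_witness_graph rtrancl_witness_graph has_diameter_witness_graph by blast
qed

theorem theorem5p1:
  fixes n :: nat and \<phi> :: "nat \<Rightarrow> nat \<Rightarrow> nat option" and E :: "(nat \<times> nat) set"
  assumes "n \<ge> 1"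
    and "acceptable_numbering \<phi>"
    and "index_equivalence \<phi> E"
    and "arith_sigma (Suc n) (rel_code E)"
  shows "graphable_with_diameter (arith_pi n) E 2"
proof -
  have equiv: "equiv UNIV E" using assms(3) unfolding index_equivalence_def by blast
  obtain p where p: "total_computable p" "strict_mono p" "\<And>w. \<phi> (p w) = \<phi> (pfst w)"
    using padding[OF assms(2)] by blast
  have "(p w, pfst w) \<in> E" for w
    using assms(3) p(3)[of w] equiv unfolding index_equivalence_def equiv_def refl_on_def by blast
  then show ?thesis by (rule graphable_with_diameter_2_if_padded[OF equiv assms(4) p(1,2)])
qed

end
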